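(* For every integer $n\ge 5$, $$\mathrm{spt}2'_{do}(n)=p'_{do}(n-4)-p'_{do}(n-3)-p'_{do}(n-2).$$
   Context: For a partition $\pi$, $s(\pi)$ is its smallest part. $\mathrm{Spt}2_{do}(n)$ is the set of partitions $\pi$ of $n$ in which $s(\pi)$ occurs exactly twice and the remaining parts (those larger than $s(\pi)$) are pairwise distinct and each has parity different from that of $s(\pi)$. $\mathrm{spt}2'_{do}(n)$ is the number of such partitions having an even number of parts greater than $s(\pi)$ minus the number having an odd number of such parts. $p'_{do}(n)$ is the number of partitions of $n$ into distinct odd parts with an even number of parts minus the number with an odd number of parts, with $p'_{do}(0)=1$. *)

theory Defs
  imports Main "HOL-Library.Multiset"
begin

definition partitions :: "nat \<Rightarrow> nat multiset set" where
  "partitions n = {\<pi>. (\<forall>x\<in>#\<pi>. 0 < x) \<and> sum_mset \<pi> = n}"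

definition spart :: "nat multiset \<Rightarrow> nat" where
  "spart \<pi> = Min (set_mset \<pi>)"

definition large_parts :: "nat multiset \<Rightarrow> nat multiset" where
  "large_parts \<pi> = filter_mset (\<lambda>x. spart \<pi> < x) \<pi>"

definition Spt2_do :: "nat \<Rightarrow> nat multiset set" where
  "Spt2_do n = {\<pi> \<in> partitions n. \<pi> \<noteq> {#} \<and> count \<pi> (spart \<pi>) = 2 \<and>
      (\<forall>x\<in>#large_parts \<pi>. count \<pi> x = 1 \<and> (odd x \<longleftrightarrow> \<not> odd (spart \<pi>)))}"

definition spt2'_do :: "nat \<Rightarrow> int" where
  "spt2'_do n = int (card {\<pi> \<in> Spt2_do n. even (size (large_parts \<pi>))})
              - int (card {\<pi> \<in> Spt2_do n. odd (size (large_parts \<pi>))})"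

definition Pdo :: "nat \<Rightarrow> nat multiset set" where
  "Pdo n = {\<pi> \<in> partitions n. \<forall>x\<in>#\<pi>. odd x \<and> count \<pi> x = 1}"

definition p'_do :: "nat \<Rightarrow> int" where
  "p'_do n = int (card {\<pi> \<in> Pdo n. even (size \<pi>)}) - int (card {\<pi> \<in> Pdo n. odd (size \<pi>)})"

end

(*
  Let G m = prod_{k >= 0} (1 - q^(m + 2k)). Removing the two copies of the smallest part s
  leaves distinct parts s+1, s+3, ..., so the generating function of spt2'_do is
  sum_{s >= 1} q^(2s) G (s+1), while that of p'_do is G 1. The factorisation
  G m = (1 - q^m) G (m+2) gives q^j G (j+1) = q (G (j+1) - G (j-1)), so sums of q^j G (j+1)
  telescope; writing q^(2j) G (j+1) = q^j (q^j G (j+1)) reduces the sum over s to two such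
  telescoping sums, whose tails contribute nothing in degrees n >= 5.
*)

theory Submission
  imports Defs
begin

lemma mem_le_sum_mset: "x \<in># \<pi> \<Longrightarrow> x \<le> sum_mset (\<pi> :: nat multiset)"
  by (auto dest!: multi_member_split)

lemma card_even_minus_card_odd:
  assumes "finite A"
  shows "int (card {x \<in> A. even (f x)}) - int (card {x \<in> A. odd (f x)}) = (\<Sum>x\<in>A. (-1) ^ f x)"
proof -
  have "(\<Sum>x\<in>A. (-1 :: int) ^ f x) = (\<Sum>x\<in>A. if even (f x) then 1 else -1)"
    by (rule sum.cong) auto
  also have "\<dots> = int (card {x \<in> A. even (f x)}) - int (card {x \<in> A. odd (f x)})"
    using assms by (simp add: sum.If_cases Int_def conj_commute)
  finally show ?thesis ..
qed

definition prog_parts :: "nat \<Rightarrow> int \<Rightarrow> nat multiset set" where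
  "prog_parts m N =
     {\<pi>. (\<forall>x\<in>#\<pi>. m \<le> x \<and> even (x - m) \<and> count \<pi> x = 1) \<and> int (sum_mset \<pi>) = N}"

text \<open>\<open>prog_sign m N\<close> is the coefficient of \<open>q^N\<close> in \<open>G m\<close>; the integer index makes it
  vanish for \<open>N < 0\<close>.\<close>

definition prog_sign :: "nat \<Rightarrow> int \<Rightarrow> int" where
  "prog_sign m N = (\<Sum>\<pi>\<in>prog_parts m N. (-1) ^ size \<pi>)"

lemma finite_prog_parts: "finite (prog_parts m N)"
proof (rule finite_subset)
  show "prog_parts m N \<subseteq> mset_set ` Pow {0..nat N}"
  proof
    fix \<pi> assume "\<pi> \<in> prog_parts m N"
    then have distinct: "\<forall>x\<in>#\<pi>. count \<pi> x = 1" and sum: "int (sum_mset \<pi>) = N"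
      by (auto simp: prog_parts_def)
    have "\<pi> = mset_set (set_mset \<pi>)"
      using distinct by (intro multiset_eqI) (auto simp: count_mset_set' count_eq_zero_iff)
    moreover have "set_mset \<pi> \<in> Pow {0..nat N}"
      using sum by (auto simp del: of_nat_sum_mset dest: mem_le_sum_mset)
    ultimately show "\<pi> \<in> mset_set ` Pow {0..nat N}" by blast
  qed
qed simp

lemma prog_parts_above: "L \<in> prog_parts (Suc s) N \<Longrightarrow> \<forall>x\<in>#L. s < x"
  by (auto simp: prog_parts_def)

lemma prog_parts_without_start: "{\<pi> \<in> prog_parts m N. m \<notin># \<pi>} = prog_parts (m + 2) N"
proof -
  have "m \<le> x \<and> even (x - m) \<and> x \<noteq> m \<longleftrightarrow> m + 2 \<le> x \<and> even (x - (m + 2))" for x :: nat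
    by presburger
  then show ?thesis
    unfolding prog_parts_def by auto
qed

lemma prog_parts_with_start:
  "{\<pi> \<in> prog_parts m N. m \<in># \<pi>} = add_mset m ` prog_parts (m + 2) (N - int m)"
proof -
  have step: "m + 2 \<le> x \<and> even (x - (m + 2)) \<longleftrightarrow> m \<le> x \<and> even (x - m) \<and> x \<noteq> m"
    for x :: nat by presburger
  show ?thesis
  proof (intro set_eqI iffI)
    fix \<pi> assume "\<pi> \<in> {\<pi> \<in> prog_parts m N. m \<in># \<pi>}"
    then obtain \<rho> where \<pi>: "\<pi> = add_mset m \<rho>" and "\<pi> \<in> prog_parts m N"
      by (auto dest: multi_member_split)
    then have "\<rho> \<in> prog_parts (m + 2) (N - int m)"
      unfolding prog_parts_def using step by (auto simp: count_eq_zero_iff split: if_splits)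
    then show "\<pi> \<in> add_mset m ` prog_parts (m + 2) (N - int m)"
      using \<pi> by blast
  next
    fix \<pi> assume "\<pi> \<in> add_mset m ` prog_parts (m + 2) (N - int m)"
    then obtain \<rho> where "\<pi> = add_mset m \<rho>" and "\<rho> \<in> prog_parts (m + 2) (N - int m)"
      by blast
    then show "\<pi> \<in> {\<pi> \<in> prog_parts m N. m \<in># \<pi>}"
      unfolding prog_parts_def using step by (auto simp: count_eq_zero_iff)
  qed
qed

lemma prog_sign_rec: "prog_sign m N = prog_sign (m + 2) N - prog_sign (m + 2) (N - int m)"
proof -
  let ?sign = "\<lambda>\<pi> :: nat multiset. (-1 :: int) ^ size \<pi>"
  have "prog_sign m N = sum ?sign {\<pi> \<in> prog_parts m N. m \<notin># \<pi>}
                        + sum ?sign {\<pi> \<in> prog_parts m N. m \<in># \<pi>}"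
    unfolding prog_sign_def using finite_prog_parts
    by (subst sum.union_disjoint [symmetric]) (auto intro: sum.cong)
  also have "sum ?sign {\<pi> \<in> prog_parts m N. m \<in># \<pi>}
               = (\<Sum>\<rho>\<in>prog_parts (m + 2) (N - int m). ?sign (add_mset m \<rho>))"
    unfolding prog_parts_with_start by (subst sum.reindex) (simp_all add: inj_on_def)
  also have "\<dots> = - prog_sign (m + 2) (N - int m)"
    by (simp add: prog_sign_def sum_negf)
  finally show ?thesis
    by (simp add: prog_parts_without_start prog_sign_def)
qed

lemma prog_sign_start_0: "prog_sign 0 N = 0"
  using prog_sign_rec [of 0 N] by simp

lemma prog_sign_eq_0:
  assumes "N \<noteq> 0" and "N < int m"
  shows "prog_sign m N = 0"
proof -
  have "prog_parts m N = {}"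
  proof (intro equals0I)
    fix \<pi> assume \<pi>: "\<pi> \<in> prog_parts m N"
    with \<open>N \<noteq> 0\<close> obtain x where "x \<in># \<pi>"
      by (cases \<pi>) (auto simp: prog_parts_def)
    then have "m \<le> x" and "x \<le> sum_mset \<pi>"
      using \<pi> by (auto simp: prog_parts_def dest: mem_le_sum_mset)
    with \<pi> \<open>N < int m\<close> show False
      by (auto simp: prog_parts_def simp del: of_nat_sum_mset)
  qed
  then show ?thesis by (simp add: prog_sign_def)
qed

lemma prog_sign_telescope:
  "(\<Sum>j<Suc K. prog_sign (j + 1) (N - int j))
     = prog_sign 1 N - prog_sign 1 (N - 1) + prog_sign (Suc K) (N - 1) + prog_sign K (N - 1)"
proof (induction K)
  case 0
  then show ?case by (simp add: prog_sign_start_0)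
next
  case (Suc K)
  have "prog_sign (K + 2) (N - int (Suc K)) = prog_sign (K + 2) (N - 1) - prog_sign K (N - 1)"
    using prog_sign_rec [of K "N - 1"] by (simp add: algebra_simps)
  with Suc show ?case by simp
qed

lemma prog_sign_telescope_closed:
  assumes "N \<noteq> 1" and "N \<le> int K"
  shows "(\<Sum>j<Suc K. prog_sign (j + 1) (N - int j)) = prog_sign 1 N - prog_sign 1 (N - 1)"
proof -
  have "prog_sign (Suc K) (N - 1) = 0" and "prog_sign K (N - 1) = 0"
    using assms by (auto intro: prog_sign_eq_0)
  then show ?thesis
    unfolding prog_sign_telescope by simp
qed

lemma prog_sign_double_step:
  "(\<Sum>j<Suc (Suc K). prog_sign (j + 2) (N - 2 - 2 * int j))
     = (\<Sum>j<Suc (Suc (Suc K)). prog_sign (j + 1) (N - 1 - int j)) - prog_sign 1 (N - 1)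
       - (\<Sum>j<Suc K. prog_sign (j + 1) (N - 3 - int j))"
proof -
  have summand: "prog_sign (j + 2) (N - 2 - 2 * int j)
                = prog_sign (j + 2) (N - 2 - int j) - prog_sign j (N - 2 - int j)" for j
    using prog_sign_rec [of j "N - 2 - int j"] by (simp add: algebra_simps)
  have "(\<Sum>j<Suc (Suc K). prog_sign (j + 2) (N - 2 - 2 * int j))
      = (\<Sum>j<Suc (Suc K). prog_sign (j + 2) (N - 2 - int j) - prog_sign j (N - 2 - int j))"
    unfolding summand ..
  also have "\<dots> = (\<Sum>j<Suc (Suc K). prog_sign (j + 2) (N - 2 - int j))
                   - (\<Sum>j<Suc (Suc K). prog_sign j (N - 2 - int j))"
    by (rule sum_subtractf)
  also have "(\<Sum>j<Suc (Suc K). prog_sign (j + 2) (N - 2 - int j))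
      = (\<Sum>j<Suc (Suc (Suc K)). prog_sign (j + 1) (N - 1 - int j)) - prog_sign 1 (N - 1)"
    by (simp only: sum.lessThan_Suc_shift [of _ "Suc (Suc K)"]) (simp add: algebra_simps)
  also have "(\<Sum>j<Suc (Suc K). prog_sign j (N - 2 - int j))
      = (\<Sum>j<Suc K. prog_sign (j + 1) (N - 3 - int j))"
    by (simp only: sum.lessThan_Suc_shift [of _ "Suc K"]) (simp add: prog_sign_start_0 algebra_simps)
  finally show ?thesis .
qed

lemma Pdo_eq_prog_parts: "Pdo n = prog_parts 1 (int n)"
proof -
  have "odd x \<longleftrightarrow> 1 \<le> x \<and> even (x - 1)" and "odd x \<Longrightarrow> 0 < x" for x :: nat
    by presburger+
  then show ?thesis
    unfolding Pdo_def prog_parts_def partitions_def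
    by (intro set_eqI iffI) (simp_all del: of_nat_sum_mset, blast+)
qed

lemma p'_do_eq_prog_sign: "p'_do n = prog_sign 1 (int n)"
  unfolding p'_do_def prog_sign_def Pdo_eq_prog_parts
  by (simp add: card_even_minus_card_odd finite_prog_parts)

context
  fixes s :: nat and L :: "nat multiset"
  assumes above: "\<forall>x\<in>#L. s < x"
begin

lemma spart_add_mset_twice: "spart (add_mset s (add_mset s L)) = s"
  unfolding spart_def using above by (intro Min_eqI) (auto intro: less_imp_le)

lemma large_parts_add_mset_twice: "large_parts (add_mset s (add_mset s L)) = L"
  unfolding large_parts_def spart_add_mset_twice using above by (simp add: filter_mset_eq_conv)

end

lemma add_mset_spart_twice_large_parts:
  assumes "\<pi> \<noteq> {#}" and "count \<pi> (spart \<pi>) = 2"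
  shows "\<pi> = add_mset (spart \<pi>) (add_mset (spart \<pi>) (large_parts \<pi>))"
proof (rule multiset_eqI)
  fix x
  have "x \<in># \<pi> \<Longrightarrow> spart \<pi> \<le> x"
    by (simp add: spart_def)
  then show "count \<pi> x = count (add_mset (spart \<pi>) (add_mset (spart \<pi>) (large_parts \<pi>))) x"
    using assms(2) by (cases "spart \<pi> < x") (auto simp: large_parts_def not_less count_eq_zero_iff)
qed

lemma Spt2_do_eq_image:
  "Spt2_do n = (\<lambda>(s, L). add_mset s (add_mset s L)) `
                 (SIGMA s:{1..n}. prog_parts (s + 1) (int n - 2 * int s))"
proof (intro set_eqI iffI)
  fix \<pi> assume "\<pi> \<in> Spt2_do n"
  then have pos: "\<forall>x\<in>#\<pi>. 0 < x" and sum: "sum_mset \<pi> = n" and "\<pi> \<noteq> {#}"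
    and twice: "count \<pi> (spart \<pi>) = 2"
    and large: "\<forall>x\<in>#large_parts \<pi>. count \<pi> x = 1 \<and> (odd x \<longleftrightarrow> \<not> odd (spart \<pi>))"
    by (auto simp: Spt2_do_def partitions_def)
  define s L where "s = spart \<pi>" and "L = large_parts \<pi>"
  have \<pi>: "\<pi> = add_mset s (add_mset s L)"
    unfolding s_def L_def using \<open>\<pi> \<noteq> {#}\<close> twice by (rule add_mset_spart_twice_large_parts)
  have "s \<ge> 1" and "2 * s \<le> n"
    using pos sum by (auto simp: \<pi>)
  moreover have "L \<in> prog_parts (s + 1) (int n - 2 * int s)"
    unfolding prog_parts_def
  proof (intro CollectI conjI ballI)
    fix x assume "x \<in># L"
    then have "s < x" and "count \<pi> x = 1" and "odd x \<longleftrightarrow> \<not> odd s"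
      using large by (auto simp: L_def s_def large_parts_def)
    then show "s + 1 \<le> x" and "even (x - (s + 1))" and "count L x = 1"
      by (auto simp: \<pi>)
  next
    show "int (sum_mset L) = int n - 2 * int s"
      using sum by (simp add: \<pi> del: of_nat_sum_mset)
  qed
  ultimately show "\<pi> \<in> (\<lambda>(s, L). add_mset s (add_mset s L)) `
                     (SIGMA s:{1..n}. prog_parts (s + 1) (int n - 2 * int s))"
    using \<pi> by force
next
  fix \<pi> assume "\<pi> \<in> (\<lambda>(s, L). add_mset s (add_mset s L)) `
                   (SIGMA s:{1..n}. prog_parts (s + 1) (int n - 2 * int s))"
  then obtain s L where "s \<ge> 1" and "L \<in> prog_parts (s + 1) (int n - 2 * int s)"
    and \<pi>: "\<pi> = add_mset s (add_mset s L)"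
    by auto
  then have L_parts: "\<forall>x\<in>#L. s + 1 \<le> x \<and> even (x - (s + 1)) \<and> count L x = 1"
    and L_sum: "int (sum_mset L) = int n - 2 * int s"
    by (auto simp: prog_parts_def simp del: of_nat_sum_mset)
  then have above: "\<forall>x\<in>#L. s < x"
    by auto
  have "\<pi> \<in> partitions n"
    using \<open>s \<ge> 1\<close> above L_sum by (auto simp: partitions_def \<pi> simp del: of_nat_sum_mset)
  moreover have "odd x \<longleftrightarrow> \<not> odd s" if "x \<in># L" for x
  proof -
    have "s + 1 \<le> x" and "even (x - (s + 1))"
      using L_parts that by auto
    then show ?thesis by presburger
  qed
  ultimately show "\<pi> \<in> Spt2_do n"
    using L_parts above
    by (auto simp: Spt2_do_def \<pi> spart_add_mset_twice large_parts_add_mset_twice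
             count_eq_zero_iff)
qed

lemma spt2'_do_eq_sum: "spt2'_do n = (\<Sum>s = 1..n. prog_sign (s + 1) (int n - 2 * int s))"
proof -
  let ?blocks = "SIGMA s:{1..n}. prog_parts (s + 1) (int n - 2 * int s)"
  have "inj_on (\<lambda>(s, L). add_mset s (add_mset s L)) ?blocks"
    by (rule inj_on_inverseI [where g = "\<lambda>\<pi>. (spart \<pi>, large_parts \<pi>)"])
      (auto dest!: prog_parts_above simp: spart_add_mset_twice large_parts_add_mset_twice)
  moreover have "finite ?blocks"
    by (simp add: finite_prog_parts)
  ultimately have "spt2'_do n = (\<Sum>(s, L)\<in>?blocks. (-1) ^ size (large_parts (add_mset s (add_mset s L))))"
    unfolding spt2'_do_def Spt2_do_eq_image
    by (simp add: card_even_minus_card_odd sum.reindex case_prod_unfold)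
  also have "\<dots> = (\<Sum>(s, L)\<in>?blocks. (-1) ^ size L)"
    by (intro sum.cong) (auto dest!: prog_parts_above simp: large_parts_add_mset_twice)
  also have "\<dots> = (\<Sum>s = 1..n. prog_sign (s + 1) (int n - 2 * int s))"
    by (simp add: prog_sign_def sum.Sigma finite_prog_parts)
  finally show ?thesis .
qed

theorem corollary8:
  fixes n :: nat
  assumes "n \<ge> 5"
  shows "spt2'_do n = p'_do (n - 4) - p'_do (n - 3) - p'_do (n - 2)"
proof -
  define K where "K = n - 2"
  have n: "n = Suc (Suc K)"
    using assms by (simp add: K_def)
  have "spt2'_do n = (\<Sum>j<n. prog_sign (j + 2) (int n - 2 - 2 * int j))"
    unfolding spt2'_do_eq_sum One_nat_def sum.atLeast1_atMost_eq
    by (intro sum.cong) (simp_all add: algebra_simps)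
  also have "\<dots> = (\<Sum>j<Suc (Suc (Suc K)). prog_sign (j + 1) (int n - 1 - int j))
                   - prog_sign 1 (int n - 1) - (\<Sum>j<Suc K. prog_sign (j + 1) (int n - 3 - int j))"
    unfolding n by (rule prog_sign_double_step)
  also have "\<dots> = prog_sign 1 (int n - 4) - prog_sign 1 (int n - 3) - prog_sign 1 (int n - 2)"
    using prog_sign_telescope_closed [of "int n - 1" "Suc (Suc K)"]
      prog_sign_telescope_closed [of "int n - 3" K] assms n
    by simp
  also have "\<dots> = p'_do (n - 4) - p'_do (n - 3) - p'_do (n - 2)"
    using assms by (simp add: p'_do_eq_prog_sign of_nat_diff)
  finally show ?thesis .
qed

end
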